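(* Let $\mathcal{A}$ and $\mathcal{B}$ be tile sets with $\mathcal{B}\subseteq\mathcal{A}$ (with consistent frequencies, the frequencies of tiles in $\mathcal{B}$ being those in $\mathcal{A}$). Then \[ \mathrm{KL}(\mathcal{A}\,\|\,\mathcal{B})=\sum_{i,j}\sum_{v\in\{0,1\}}p^*_{\mathcal{A}}((i,j)=v)\log\frac{p^*_{\mathcal{A}}((i,j)=v)}{p^*_{\mathcal{B}}((i,j)=v)}. \]
   Context: Fix $n,m\ge1$; $\mathcal{D}$ is the set of $n\times m$ binary matrices. A tile is $T=(t(T),a(T))$ with nonempty row set $t(T)\subseteq\{1..n\}$ and column set $a(T)\subseteq\{1..m\}$, $\mathrm{area}(T)=t(T)\times a(T)$; $\mathrm{fr}(T;D)=\frac1{|\mathrm{area}(T)|}\sum_{(i,j)\in\mathrm{area}(T)}D(i,j)$, $\mathrm{fr}(T;p)=\sum_Dp(D)\mathrm{fr}(T;D)$, $p((i,j)=v)=\sum_{D:D(i,j)=v}p(D)$. For a tile set $\mathcal{T}$ with consistent target frequencies $\alpha_T$, $p^*_{\mathcal{T}}$ is the entropy-maximising distribution among $\{p:\mathrm{fr}(T;p)=\alpha_T\ \forall T\in\mathcal{T}\}$. $\mathrm{KL}(p\|q)=\sum_Dp(D)\log\frac{p(D)}{q(D)}$ (natural log, $0\log0=0$), and $\mathrm{KL}(\mathcal{T}\|\mathcal{U})$ means $\mathrm{KL}(p^*_{\mathcal{T}}\|p^*_{\mathcal{U}})$. *)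

theory Defs
  imports Complex_Main
begin

text \<open>Binary n x m matrices: functions on index pairs, identically False outside
  the grid {1..n} x {1..m}; entry D(i,j) = 1 iff D (i,j) = True.\<close>
definition mats :: "nat \<Rightarrow> nat \<Rightarrow> (nat \<times> nat \<Rightarrow> bool) set" where
  "mats n m = {D. \<forall>i j. (i, j) \<notin> {1..n} \<times> {1..m} \<longrightarrow> D (i, j) = False}"

type_synonym tile = "nat set \<times> nat set"

definition is_tile :: "nat \<Rightarrow> nat \<Rightarrow> tile \<Rightarrow> bool" where
  "is_tile n m T \<longleftrightarrow> fst T \<noteq> {} \<and> fst T \<subseteq> {1..n} \<and> snd T \<noteq> {} \<and> snd T \<subseteq> {1..m}"

definition area :: "tile \<Rightarrow> (nat \<times> nat) set" where
  "area T = fst T \<times> snd T"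

definition fr_mat :: "tile \<Rightarrow> (nat \<times> nat \<Rightarrow> bool) \<Rightarrow> real" where
  "fr_mat T D = (\<Sum>c\<in>area T. of_bool (D c)) / real (card (area T))"

definition fr :: "nat \<Rightarrow> nat \<Rightarrow> tile \<Rightarrow> ((nat \<times> nat \<Rightarrow> bool) \<Rightarrow> real) \<Rightarrow> real" where
  "fr n m T p = (\<Sum>D\<in>mats n m. p D * fr_mat T D)"

definition is_dist :: "nat \<Rightarrow> nat \<Rightarrow> ((nat \<times> nat \<Rightarrow> bool) \<Rightarrow> real) \<Rightarrow> bool" where
  "is_dist n m p \<longleftrightarrow> (\<forall>D\<in>mats n m. 0 \<le> p D) \<and> (\<Sum>D\<in>mats n m. p D) = 1"

definition feasible :: "nat \<Rightarrow> nat \<Rightarrow> tile set \<Rightarrow> (tile \<Rightarrow> real)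
    \<Rightarrow> ((nat \<times> nat \<Rightarrow> bool) \<Rightarrow> real) set" where
  "feasible n m \<T> \<alpha> = {p. is_dist n m p \<and> (\<forall>T\<in>\<T>. fr n m T p = \<alpha> T)}"

text \<open>Shannon entropy (natural log; ln 0 = 0 in Isabelle, giving 0 log 0 = 0).\<close>
definition entropy :: "nat \<Rightarrow> nat \<Rightarrow> ((nat \<times> nat \<Rightarrow> bool) \<Rightarrow> real) \<Rightarrow> real" where
  "entropy n m p = - (\<Sum>D\<in>mats n m. p D * ln (p D))"

definition maxent :: "nat \<Rightarrow> nat \<Rightarrow> tile set \<Rightarrow> (tile \<Rightarrow> real)
    \<Rightarrow> ((nat \<times> nat \<Rightarrow> bool) \<Rightarrow> real)" where
  "maxent n m \<T> \<alpha> = (SOME p. p \<in> feasible n m \<T> \<alpha> \<and>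
      (\<forall>q\<in>feasible n m \<T> \<alpha>. entropy n m q \<le> entropy n m p))"

definition KL :: "nat \<Rightarrow> nat \<Rightarrow> ((nat \<times> nat \<Rightarrow> bool) \<Rightarrow> real)
    \<Rightarrow> ((nat \<times> nat \<Rightarrow> bool) \<Rightarrow> real) \<Rightarrow> real" where
  "KL n m p q = (\<Sum>D\<in>mats n m. p D * ln (p D / q D))"

definition cellp :: "nat \<Rightarrow> nat \<Rightarrow> ((nat \<times> nat \<Rightarrow> bool) \<Rightarrow> real) \<Rightarrow> nat \<times> nat \<Rightarrow> bool \<Rightarrow> real" where
  "cellp n m p c v = (\<Sum>D\<in>{D\<in>mats n m. D c = v}. p D)"

end

theory Submission
  imports Defs "HOL-Analysis.Analysis" "HOL-Real_Asymp.Real_Asymp"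
begin

text \<open>Tile frequencies depend on a distribution only through its cell marginals, and among
  all distributions with given cell marginals the product of those marginals has the largest
  entropy (Gibbs' inequality, with its equality case). Hence every maximum-entropy distribution
  is the product of its cell marginals. Moreover an entropy maximiser charges every matrix that
  some feasible distribution charges, because mixing in a little of that distribution gains
  entropy of order \<open>-t ln t\<close> while losing only \<open>O(t)\<close>. Since \<open>p\<^sup>*\<^sub>\<A>\<close> is
  \<open>\<B>\<close>-feasible, \<open>p\<^sup>*\<^sub>\<B>\<close> is positive wherever \<open>p\<^sup>*\<^sub>\<A>\<close> is, so
  \<open>log (p\<^sup>*\<^sub>\<A>(D) / p\<^sup>*\<^sub>\<B>(D))\<close> splits into a sum over the cells, and the
  divergence collapses to the sum of the cellwise divergences.\<close>

lemma mult_ln_le: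
  fixes a z :: real
  assumes "0 \<le> a" "0 < z"
  shows "a * ln z \<le> a * ln a - a + z"
proof (cases "a = 0")
  case False
  with assms have "a * (ln z - ln a) \<le> a * ((z - a) / a)"
    by (intro mult_left_mono ln_diff_le) auto
  moreover have "a * ((z - a) / a) = z - a" using False by simp
  ultimately show ?thesis by (simp add: algebra_simps)
qed (use assms in simp)

lemma mult_ln_less:
  fixes a z :: real
  assumes "0 < a" "0 < z" "z \<noteq> a"
  shows "a * ln z < a * ln a - a + z"
proof -
  from assms have "a * (ln z - ln a) < a * ((z - a) / a)"
    by (intro mult_strict_left_mono ln_diff_less) auto
  moreover have "a * ((z - a) / a) = z - a" using assms by simp
  ultimately show ?thesis by (simp add: algebra_simps)
qed

lemma continuous_on_mult_ln: "continuous_on {0..} (\<lambda>x::real. x * ln x)"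
proof -
  have "((\<lambda>x::real. x * ln x) \<longlongrightarrow> 0) (at_right 0)"
    by real_asymp
  then have "continuous (at 0 within {0..}) (\<lambda>x::real. x * ln x)"
    by (simp add: continuous_within at_within_Ici_at_right)
  moreover have "continuous (at x within {0..}) (\<lambda>x::real. x * ln x)" if "0 < x" for x :: real
  proof -
    have "isCont (\<lambda>x::real. x * ln x) x" using that by (intro continuous_intros) auto
    then show ?thesis by (rule continuous_at_imp_continuous_within)
  qed
  ultimately show ?thesis
    unfolding continuous_on_eq_continuous_within by (metis atLeast_iff order_le_less)
qed

lemma mult_ln_convex:
  fixes u v t :: real
  assumes "0 \<le> u" "0 \<le> v" "0 \<le> t" "t \<le> 1"
  shows "((1 - t) * u + t * v) * ln ((1 - t) * u + t * v) \<le> (1 - t) * (u * ln u) + t * (v * ln v)"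
proof -
  define z where "z = (1 - t) * u + t * v"
  consider "(1 - t) * u = 0" "t * v = 0" | "0 < z"
    using assms unfolding z_def by (smt (verit) mult_nonneg_nonneg)
  then show ?thesis
  proof cases
    case 2
    have "z * ln z = (1 - t) * (u * ln z) + t * (v * ln z)"
      unfolding z_def by (simp add: algebra_simps)
    also have "\<dots> \<le> (1 - t) * (u * ln u - u + z) + t * (v * ln v - v + z)"
      using assms 2 by (intro add_mono mult_left_mono mult_ln_le) auto
    also have "\<dots> = (1 - t) * (u * ln u) + t * (v * ln v)"
      unfolding z_def by (simp add: algebra_simps)
    finally show ?thesis unfolding z_def .
  qed (auto simp: mult.assoc[symmetric])
qed

lemma gibbs_equality:
  fixes p r :: "'a \<Rightarrow> real"
  assumes "finite M"
    and p_nonneg: "\<And>x. x \<in> M \<Longrightarrow> 0 \<le> p x" and r_nonneg: "\<And>x. x \<in> M \<Longrightarrow> 0 \<le> r x"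
    and "sum r M = sum p M"
    and r_pos: "\<And>x. x \<in> M \<Longrightarrow> 0 < p x \<Longrightarrow> 0 < r x"
    and "(\<Sum>x\<in>M. p x * ln (p x)) \<le> (\<Sum>x\<in>M. p x * ln (r x))"
    and x: "x \<in> M"
  shows "p x = r x"
proof -
  define g where "g x = p x * ln (p x) - p x + r x - p x * ln (r x)" for x
  have g_nonneg: "0 \<le> g y" if "y \<in> M" for y
  proof (cases "p y = 0")
    case True
    then show ?thesis using r_nonneg[OF that] by (simp add: g_def)
  next
    case False
    then have "0 < p y" using p_nonneg[OF that] by linarith
    then show ?thesis using mult_ln_le[of "p y" "r y"] r_pos[OF that] by (simp add: g_def)
  qed
  have "sum g M = (\<Sum>x\<in>M. p x * ln (p x)) - (\<Sum>x\<in>M. p x * ln (r x))"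
    using assms(4) by (simp add: g_def sum.distrib sum_subtractf)
  with assms(6) have "sum g M \<le> 0" by simp
  then have "sum g M = 0" using g_nonneg by (simp add: antisym sum_nonneg)
  then have "g x = 0" using sum_nonneg_eq_0_iff[OF assms(1)] g_nonneg x by blast
  show ?thesis
  proof (rule ccontr)
    assume ne: "p x \<noteq> r x"
    have "0 < g x"
    proof (cases "p x = 0")
      case True
      then show ?thesis using ne r_nonneg[OF x] by (simp add: g_def)
    next
      case False
      then have "0 < p x" "0 < r x" using p_nonneg[OF x] r_pos[OF x] by linarith+
      then show ?thesis using mult_ln_less[of "p x" "r x"] ne by (simp add: g_def)
    qed
    with \<open>g x = 0\<close> show False by simp
  qed
qed

definition supported_on :: "'c set \<Rightarrow> ('c \<Rightarrow> bool) set" where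
  "supported_on G = {D. \<forall>c. D c \<longrightarrow> c \<in> G}"

definition cells :: "nat \<Rightarrow> nat \<Rightarrow> (nat \<times> nat) set" where
  "cells n m = {1..n} \<times> {1..m}"

lemma finite_cells [simp]: "finite (cells n m)"
  by (simp add: cells_def)

lemma mats_eq_supported_on: "mats n m = supported_on (cells n m)"
proof -
  have "(\<forall>i j. (i, j) \<notin> A \<longrightarrow> D (i, j) = False) \<longleftrightarrow> (\<forall>c. D c \<longrightarrow> c \<in> A)" for A and D :: "nat \<times> nat \<Rightarrow> bool"
    by auto
  then show ?thesis unfolding mats_def supported_on_def cells_def by blast
qed

lemma supported_on_eq_image_Pow: "supported_on G = (\<lambda>S c. c \<in> S) ` Pow G"
  unfolding supported_on_def by (auto intro!: image_eqI[where x = "Collect _"])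

lemma finite_mats: "finite (mats n m)"
  unfolding mats_eq_supported_on supported_on_eq_image_Pow by simp

lemma sum_supported_on_prod:
  fixes f :: "'c \<Rightarrow> bool \<Rightarrow> 'a :: comm_semiring_1"
  assumes "finite G"
  shows "(\<Sum>D\<in>{D\<in>supported_on G. \<forall>c\<in>G. D c \<in> V c}. \<Prod>c\<in>G. f c (D c)) = (\<Prod>c\<in>G. \<Sum>v\<in>V c. f c v)"
proof -
  have "(\<Prod>c\<in>G. \<Sum>v\<in>V c. f c v) = (\<Sum>g\<in>Pi\<^sub>E G V. \<Prod>c\<in>G. f c (g c))"
    using assms by (rule prod_sum_PiE) auto
  also have "\<dots> = (\<Sum>D\<in>{D\<in>supported_on G. \<forall>c\<in>G. D c \<in> V c}. \<Prod>c\<in>G. f c (D c))"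
  proof (rule sum.reindex_bij_witness[of _ "\<lambda>D. restrict D G" "\<lambda>g c. c \<in> G \<and> g c"])
    fix g assume g: "g \<in> Pi\<^sub>E G V"
    then show "restrict (\<lambda>c. c \<in> G \<and> g c) G = g"
      by (auto simp: PiE_iff intro: extensionalityI[OF restrict_extensional])
  qed (auto simp: supported_on_def PiE_iff fun_eq_iff)
  finally show ?thesis by simp
qed

lemma sum_mats_cell:
  "(\<Sum>D\<in>mats n m. q D * f (D c)) = (\<Sum>v\<in>UNIV. cellp n m q c v * f v)"
proof -
  have "(\<Sum>v\<in>UNIV. cellp n m q c v * f v) = (\<Sum>v\<in>UNIV. \<Sum>D\<in>{D\<in>mats n m. D c = v}. q D * f (D c))"
    unfolding cellp_def sum_distrib_right by (intro sum.cong) auto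
  also have "\<dots> = (\<Sum>D\<in>mats n m. q D * f (D c))"
    using finite_mats by (intro sum.group) auto
  finally show ?thesis by simp
qed

lemma sum_mats_sum_cells:
  assumes "finite G"
  shows "(\<Sum>D\<in>mats n m. q D * (\<Sum>c\<in>G. f c (D c))) =
    (\<Sum>c\<in>G. \<Sum>v\<in>UNIV. cellp n m q c v * f c v)"
proof -
  have "(\<Sum>D\<in>mats n m. q D * (\<Sum>c\<in>G. f c (D c))) = (\<Sum>c\<in>G. \<Sum>D\<in>mats n m. q D * f c (D c))"
    by (simp add: sum_distrib_left sum.swap[of _ "mats n m"])
  then show ?thesis by (simp add: sum_mats_cell)
qed

lemma fr_eq_sum_cellp:
  "fr n m T q = (\<Sum>c\<in>area T. cellp n m q c True) / real (card (area T))"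
proof (cases "finite (area T)")
  case True
  then have "fr n m T q = (\<Sum>D\<in>mats n m. q D * (\<Sum>c\<in>area T. of_bool (D c))) / real (card (area T))"
    unfolding fr_def fr_mat_def by (simp add: sum_divide_distrib)
  also have "\<dots> = (\<Sum>c\<in>area T. cellp n m q c True) / real (card (area T))"
    using sum_mats_sum_cells[OF True, where f = "\<lambda>_ v. of_bool v"] by (simp add: UNIV_bool)
  finally show ?thesis .
qed (simp add: fr_def fr_mat_def)

lemma cellp_nonneg: "is_dist n m q \<Longrightarrow> 0 \<le> cellp n m q c v"
  unfolding cellp_def is_dist_def by (auto intro: sum_nonneg)

lemma sum_cellp: "is_dist n m q \<Longrightarrow> (\<Sum>v\<in>UNIV. cellp n m q c v) = 1"
  using sum_mats_cell[where f = "\<lambda>_. 1"] by (simp add: is_dist_def)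

lemma le_cellp: "is_dist n m q \<Longrightarrow> D \<in> mats n m \<Longrightarrow> q D \<le> cellp n m q c (D c)"
  unfolding cellp_def is_dist_def using finite_mats by (intro member_le_sum) auto

lemma feasible_mix:
  assumes "p \<in> feasible n m \<T> \<alpha>" "q \<in> feasible n m \<T> \<alpha>" "0 \<le> t" "t \<le> 1"
  shows "(\<lambda>D. (1 - t) * p D + t * q D) \<in> feasible n m \<T> \<alpha>"
proof -
  have "fr n m T (\<lambda>D. (1 - t) * p D + t * q D) = (1 - t) * fr n m T p + t * fr n m T q" for T
    unfolding fr_def by (simp add: distrib_right sum.distrib sum_distrib_left mult.assoc)
  moreover have "is_dist n m (\<lambda>D. (1 - t) * p D + t * q D)"
    using assms unfolding feasible_def is_dist_def by (auto simp: sum.distrib sum_distrib_left[symmetric])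
  ultimately show ?thesis
    using assms unfolding feasible_def by (auto simp: left_diff_distrib)
qed

lemma feasible_restrict_mats:
  assumes "q \<in> feasible n m \<T> \<alpha>"
  shows "(\<lambda>D. if D \<in> mats n m then q D else 0) \<in> feasible n m \<T> \<alpha>"
proof -
  have "fr n m T (\<lambda>D. if D \<in> mats n m then q D else 0) = fr n m T q" for T
    unfolding fr_def by (rule sum.cong) auto
  with assms show ?thesis unfolding feasible_def is_dist_def by auto
qed

lemma entropy_restrict_mats:
  "entropy n m (\<lambda>D. if D \<in> mats n m then q D else 0) = entropy n m q"
  unfolding entropy_def by (simp cong: sum.cong)

lemma compact_feasible_vanishing:
  "compact {p \<in> feasible n m \<T> \<alpha>. \<forall>D. D \<notin> mats n m \<longrightarrow> p D = 0}"
proof -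
  define K where "K D = (if D \<in> mats n m then {0..1} else {0::real})" for D
  define C where "C = {p. sum p (mats n m) = 1} \<inter> (\<Inter>T\<in>\<T>. {p. fr n m T p = \<alpha> T})"
  have "compactin (product_topology (\<lambda>_. euclidean) UNIV) (Pi\<^sub>E UNIV K)"
    by (simp add: compactin_PiE K_def)
  then have "compact (Pi\<^sub>E UNIV K)"
    by (simp add: euclidean_product_topology compactin_euclidean_iff)
  moreover have "closed C"
    unfolding C_def fr_def by (intro closed_Int closed_INT ballI closed_Collect_eq continuous_intros) simp_all
  moreover have "{p \<in> feasible n m \<T> \<alpha>. \<forall>D. D \<notin> mats n m \<longrightarrow> p D = 0} = Pi\<^sub>E UNIV K \<inter> C"
  proof (intro equalityI subsetI)
    fix p assume p: "p \<in> {p \<in> feasible n m \<T> \<alpha>. \<forall>D. D \<notin> mats n m \<longrightarrow> p D = 0}"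
    then have "p D \<le> 1" if "D \<in> mats n m" for D
      using that finite_mats member_le_sum[of D "mats n m" p] by (auto simp: feasible_def is_dist_def)
    with p show "p \<in> Pi\<^sub>E UNIV K \<inter> C"
      by (auto simp: feasible_def is_dist_def K_def C_def PiE_UNIV_domain)
  next
    fix p assume "p \<in> Pi\<^sub>E UNIV K \<inter> C"
    then show "p \<in> {p \<in> feasible n m \<T> \<alpha>. \<forall>D. D \<notin> mats n m \<longrightarrow> p D = 0}"
      by (auto simp: feasible_def is_dist_def K_def C_def PiE_UNIV_domain Pi_iff split: if_splits)
  qed
  ultimately show ?thesis by (simp add: compact_Int_closed)
qed

definition is_maxent :: "nat \<Rightarrow> nat \<Rightarrow> tile set \<Rightarrow> (tile \<Rightarrow> real)
    \<Rightarrow> ((nat \<times> nat \<Rightarrow> bool) \<Rightarrow> real) \<Rightarrow> bool" where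
  "is_maxent n m \<T> \<alpha> p \<longleftrightarrow>
     p \<in> feasible n m \<T> \<alpha> \<and> (\<forall>q\<in>feasible n m \<T> \<alpha>. entropy n m q \<le> entropy n m p)"

lemma exists_is_maxent:
  assumes "feasible n m \<T> \<alpha> \<noteq> {}"
  shows "\<exists>p. is_maxent n m \<T> \<alpha> p"
proof -
  let ?S = "{p \<in> feasible n m \<T> \<alpha>. \<forall>D. D \<notin> mats n m \<longrightarrow> p D = 0}"
  let ?restrict = "\<lambda>q D. if D \<in> mats n m then q D else 0"
  have restrict_in_S: "?restrict q \<in> ?S" if "q \<in> feasible n m \<T> \<alpha>" for q
    using feasible_restrict_mats[OF that] by simp
  with assms have S_ne: "?S \<noteq> {}" by blast
  have S_cont: "continuous_on ?S (entropy n m)"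
  proof -
    have "continuous_on ?S (\<lambda>p. p D * ln (p D))" if "D \<in> mats n m" for D
      using that by (intro continuous_on_compose2[OF continuous_on_mult_ln])
        (auto simp: feasible_def is_dist_def intro: continuous_on_subset[OF continuous_on_product_coordinates])
    then show ?thesis unfolding entropy_def by (intro continuous_on_minus continuous_on_sum)
  qed
  obtain p where p: "p \<in> ?S" and p_max: "\<forall>q\<in>?S. entropy n m q \<le> entropy n m p"
    using continuous_attains_sup[OF compact_feasible_vanishing S_ne S_cont] by blast
  have "entropy n m q \<le> entropy n m p" if "q \<in> feasible n m \<T> \<alpha>" for q
    using bspec[OF p_max restrict_in_S[OF that]] by (simp only: entropy_restrict_mats)
  with p show ?thesis unfolding is_maxent_def by blast
qed

lemma is_maxent_maxent:
  "feasible n m \<T> \<alpha> \<noteq> {} \<Longrightarrow> is_maxent n m \<T> \<alpha> (maxent n m \<T> \<alpha>)"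
  using someI_ex[OF exists_is_maxent] unfolding maxent_def is_maxent_def .

definition prod_marginals :: "nat \<Rightarrow> nat \<Rightarrow> ((nat \<times> nat \<Rightarrow> bool) \<Rightarrow> real)
    \<Rightarrow> (nat \<times> nat \<Rightarrow> bool) \<Rightarrow> real" where
  "prod_marginals n m p D = (\<Prod>c\<in>cells n m. cellp n m p c (D c))"

lemma sum_prod_marginals:
  assumes "is_dist n m p"
  shows "(\<Sum>D\<in>mats n m. prod_marginals n m p D) = 1"
  using sum_supported_on_prod[where G = "cells n m" and V = "\<lambda>_. UNIV" and f = "cellp n m p"]
  by (simp add: prod_marginals_def mats_eq_supported_on sum_cellp[OF assms])

lemma cellp_prod_marginals:
  assumes p: "is_dist n m p"
  shows "cellp n m (prod_marginals n m p) c v = cellp n m p c v"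
proof (cases "c \<in> cells n m")
  case True
  define V where "V c' = (if c' = c then {v} else UNIV)" for c'
  have "{D\<in>mats n m. D c = v} = {D\<in>supported_on (cells n m). \<forall>c'\<in>cells n m. D c' \<in> V c'}"
    using True by (auto simp: V_def mats_eq_supported_on)
  then have "cellp n m (prod_marginals n m p) c v
      = (\<Sum>D\<in>{D\<in>supported_on (cells n m). \<forall>c'\<in>cells n m. D c' \<in> V c'}.
           \<Prod>c'\<in>cells n m. cellp n m p c' (D c'))"
    unfolding cellp_def[of _ _ "prod_marginals n m p"] prod_marginals_def by simp
  also have "\<dots> = (\<Prod>c'\<in>cells n m. \<Sum>v'\<in>V c'. cellp n m p c' v')"
    by (simp add: sum_supported_on_prod)
  also have "\<dots> = cellp n m p c v"
    using True by (simp add: prod.remove V_def sum_cellp[OF p])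
  finally show ?thesis .
next
  case False
  then have "\<not> D c" if "D \<in> mats n m" for D
    using that False unfolding mats_eq_supported_on supported_on_def by blast
  then have "{D\<in>mats n m. D c = v} = (if v then {} else mats n m)"
    by auto
  then show ?thesis
    using p sum_prod_marginals[OF p] by (simp add: cellp_def is_dist_def)
qed

lemma is_dist_prod_marginals: "is_dist n m p \<Longrightarrow> is_dist n m (prod_marginals n m p)"
  unfolding is_dist_def[of _ _ "prod_marginals n m p"] prod_marginals_def
  by (simp add: prod_nonneg cellp_nonneg sum_prod_marginals[unfolded prod_marginals_def])

lemma prod_marginals_in_feasible:
  "p \<in> feasible n m \<T> \<alpha> \<Longrightarrow> prod_marginals n m p \<in> feasible n m \<T> \<alpha>"
  unfolding feasible_def by (simp add: is_dist_prod_marginals fr_eq_sum_cellp cellp_prod_marginals)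

lemma sum_mats_mult_ln_prod_marginals:
  assumes "\<And>D. D \<in> mats n m \<Longrightarrow> q D \<noteq> 0 \<Longrightarrow> prod_marginals n m p D \<noteq> 0"
  shows "(\<Sum>D\<in>mats n m. q D * ln (prod_marginals n m p D)) =
    (\<Sum>c\<in>cells n m. \<Sum>v\<in>UNIV. cellp n m q c v * ln (cellp n m p c v))"
proof -
  have "(\<Sum>D\<in>mats n m. q D * ln (prod_marginals n m p D))
      = (\<Sum>D\<in>mats n m. q D * (\<Sum>c\<in>cells n m. ln (cellp n m p c (D c))))"
  proof (rule sum.cong)
    fix D assume "D \<in> mats n m"
    then show "q D * ln (prod_marginals n m p D) = q D * (\<Sum>c\<in>cells n m. ln (cellp n m p c (D c)))"
      using assms by (cases "q D = 0") (auto simp: prod_marginals_def ln_prod)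
  qed simp
  also have "\<dots> = (\<Sum>c\<in>cells n m. \<Sum>v\<in>UNIV. cellp n m q c v * ln (cellp n m p c v))"
    by (rule sum_mats_sum_cells) simp
  finally show ?thesis .
qed

lemma is_maxent_eq_prod_marginals:
  assumes "is_maxent n m \<T> \<alpha> p" "D \<in> mats n m"
  shows "p D = prod_marginals n m p D"
proof -
  have p: "is_dist n m p" and r: "is_dist n m (prod_marginals n m p)"
    using assms(1) by (auto simp: is_maxent_def feasible_def is_dist_prod_marginals)
  have r_pos: "0 < prod_marginals n m p D" if "D \<in> mats n m" "0 < p D" for D
    unfolding prod_marginals_def using le_cellp[OF p that(1)] that(2)
    by (intro prod_pos) (auto intro: less_le_trans)
  have "entropy n m (prod_marginals n m p) \<le> entropy n m p"
    using assms(1) prod_marginals_in_feasible by (auto simp: is_maxent_def)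
  moreover have "(\<Sum>D\<in>mats n m. prod_marginals n m p D * ln (prod_marginals n m p D))
      = (\<Sum>D\<in>mats n m. p D * ln (prod_marginals n m p D))"
  proof -
    have "p D \<noteq> 0 \<Longrightarrow> prod_marginals n m p D \<noteq> 0" if "D \<in> mats n m" for D
      using r_pos[OF that] p that by (fastforce simp: is_dist_def order_le_less)
    then show ?thesis
      by (simp add: sum_mats_mult_ln_prod_marginals cellp_prod_marginals[OF p])
  qed
  ultimately have "(\<Sum>D\<in>mats n m. p D * ln (p D)) \<le> (\<Sum>D\<in>mats n m. p D * ln (prod_marginals n m p D))"
    by (simp add: entropy_def)
  moreover have "sum (prod_marginals n m p) (mats n m) = sum p (mats n m)"
    using p sum_prod_marginals[OF p] by (simp add: is_dist_def)
  ultimately show ?thesis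
    using p r r_pos assms(2) by (intro gibbs_equality[OF finite_mats]) (simp_all add: is_dist_def)
qed

lemma entropy_mix_ge:
  assumes p: "is_dist n m p" and q: "is_dist n m q" and D0: "D0 \<in> mats n m" "p D0 = 0"
    and t: "0 < t" "t \<le> 1"
  shows "(1 - t) * entropy n m p + t * entropy n m q - t * (q D0 * ln t)
    \<le> entropy n m (\<lambda>D. (1 - t) * p D + t * q D)"
proof -
  define B where "B D = (1 - t) * (p D * ln (p D)) + t * (q D * ln (q D))
    + (if D = D0 then t * (q D0 * ln t) else 0)" for D
  have "((1 - t) * p D + t * q D) * ln ((1 - t) * p D + t * q D) \<le> B D" if D: "D \<in> mats n m" for D
  proof (cases "D = D0")
    case True
    have "0 \<le> q D0" using q D0(1) by (simp add: is_dist_def)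
    then have "(t * q D0) * ln (t * q D0) = t * (q D0 * ln (q D0)) + t * (q D0 * ln t)"
      using t by (cases "q D0 = 0") (simp_all add: ln_mult algebra_simps)
    then show ?thesis using True D0(2) by (simp add: B_def)
  next
    case False
    then show ?thesis
      using mult_ln_convex[of "p D" "q D" t] p q D t by (simp add: B_def is_dist_def)
  qed
  then have "(\<Sum>D\<in>mats n m. ((1 - t) * p D + t * q D) * ln ((1 - t) * p D + t * q D)) \<le> sum B (mats n m)"
    by (rule sum_mono)
  also have "sum B (mats n m) = (1 - t) * (\<Sum>D\<in>mats n m. p D * ln (p D))
      + t * (\<Sum>D\<in>mats n m. q D * ln (q D)) + t * (q D0 * ln t)"
    unfolding B_def using D0(1) finite_mats by (simp add: sum.distrib sum_distrib_left)
  finally show ?thesis by (simp add: entropy_def)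
qed

lemma is_maxent_pos:
  assumes p: "is_maxent n m \<T> \<alpha> p" and q: "q \<in> feasible n m \<T> \<alpha>"
    and D0: "D0 \<in> mats n m" "0 < q D0"
  shows "0 < p D0"
proof (rule ccontr)
  assume "\<not> 0 < p D0"
  moreover have "0 \<le> p D0" using p D0(1) by (simp add: is_maxent_def feasible_def is_dist_def)
  ultimately have p_D0: "p D0 = 0" by simp
  define K where "K = entropy n m p - entropy n m q"
  have "0 \<le> K" using p q by (simp add: K_def is_maxent_def)
  \<comment> \<open>chosen so that the gain \<open>- t * q D0 * ln t = t * (K + 1)\<close> at \<open>D0\<close> beats the loss \<open>t * K\<close>\<close>
  define t where "t = exp (- (K + 1) / q D0)"
  have t: "0 < t" "t < 1"
    using \<open>0 \<le> K\<close> D0(2) by (simp_all add: t_def divide_neg_pos)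
  have "q D0 * ln t = entropy n m q - entropy n m p - 1"
    using D0(2) by (simp add: t_def K_def)
  then have "(1 - t) * entropy n m p + t * entropy n m q - t * (q D0 * ln t) = entropy n m p + t"
    by (simp only:) (simp add: algebra_simps)
  then have "entropy n m p + t \<le> entropy n m (\<lambda>D. (1 - t) * p D + t * q D)"
    using entropy_mix_ge[of n m p q D0 t] p q D0(1) p_D0 t
    by (simp add: is_maxent_def feasible_def)
  moreover have "(\<lambda>D. (1 - t) * p D + t * q D) \<in> feasible n m \<T> \<alpha>"
    using p q t by (intro feasible_mix) (auto simp: is_maxent_def)
  ultimately show False using p t by (force simp: is_maxent_def)
qed

lemma KL_eq_sum_cells:
  assumes p: "is_dist n m p" and q: "is_dist n m q"
    and p_prod: "\<And>D. D \<in> mats n m \<Longrightarrow> p D = prod_marginals n m p D"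
    and q_prod: "\<And>D. D \<in> mats n m \<Longrightarrow> q D = prod_marginals n m q D"
    and q_pos: "\<And>D. D \<in> mats n m \<Longrightarrow> 0 < p D \<Longrightarrow> 0 < q D"
  shows "KL n m p q =
    (\<Sum>c\<in>cells n m. \<Sum>v\<in>UNIV. cellp n m p c v * ln (cellp n m p c v / cellp n m q c v))"
proof -
  have "p D * ln (p D / q D) = p D * (\<Sum>c\<in>cells n m. ln (cellp n m p c (D c) / cellp n m q c (D c)))"
    if D: "D \<in> mats n m" for D
  proof (cases "p D = 0")
    case False
    then have "0 < p D" "0 < q D" using p q_pos[OF D] D by (auto simp: is_dist_def order_le_less)
    then have "cellp n m p c (D c) / cellp n m q c (D c) \<noteq> 0" for c
      using less_le_trans[OF _ le_cellp[OF p D]] less_le_trans[OF _ le_cellp[OF q D]]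
      by (metis divide_eq_0_iff less_irrefl)
    moreover have "p D / q D = (\<Prod>c\<in>cells n m. cellp n m p c (D c) / cellp n m q c (D c))"
      using p_prod[OF D] q_prod[OF D] by (simp add: prod_marginals_def prod_dividef)
    ultimately show ?thesis by (simp add: ln_prod[OF finite_cells])
  qed simp
  then have "KL n m p q
      = (\<Sum>D\<in>mats n m. p D * (\<Sum>c\<in>cells n m. ln (cellp n m p c (D c) / cellp n m q c (D c))))"
    unfolding KL_def by (rule sum.cong[OF refl])
  also have "\<dots> = (\<Sum>c\<in>cells n m. \<Sum>v\<in>UNIV. cellp n m p c v * ln (cellp n m p c v / cellp n m q c v))"
    by (rule sum_mats_sum_cells) simp
  finally show ?thesis .
qed

theorem theorem4:
  fixes n m :: nat and \<A> \<B> :: "tile set" and \<alpha> :: "tile \<Rightarrow> real"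
  assumes "n \<ge> 1" and "m \<ge> 1"
    and "\<forall>T\<in>\<A>. is_tile n m T"
    and "\<B> \<subseteq> \<A>"
    and "feasible n m \<A> \<alpha> \<noteq> {}"
  shows "KL n m (maxent n m \<A> \<alpha>) (maxent n m \<B> \<alpha>) =
    (\<Sum>c\<in>{1..n} \<times> {1..m}. \<Sum>v\<in>(UNIV :: bool set).
       cellp n m (maxent n m \<A> \<alpha>) c v *
         ln (cellp n m (maxent n m \<A> \<alpha>) c v / cellp n m (maxent n m \<B> \<alpha>) c v))"
proof -
  have feasible_sub: "feasible n m \<A> \<alpha> \<subseteq> feasible n m \<B> \<alpha>"
    using \<open>\<B> \<subseteq> \<A>\<close> by (auto simp: feasible_def)
  have A: "is_maxent n m \<A> \<alpha> (maxent n m \<A> \<alpha>)"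
    using assms(5) by (rule is_maxent_maxent)
  have B: "is_maxent n m \<B> \<alpha> (maxent n m \<B> \<alpha>)"
    using assms(5) feasible_sub by (intro is_maxent_maxent) blast
  have "maxent n m \<A> \<alpha> \<in> feasible n m \<B> \<alpha>"
    using A feasible_sub by (auto simp: is_maxent_def)
  then have "0 < maxent n m \<B> \<alpha> D" if "D \<in> mats n m" "0 < maxent n m \<A> \<alpha> D" for D
    using is_maxent_pos[OF B] that by blast
  moreover have "is_dist n m (maxent n m \<A> \<alpha>)" "is_dist n m (maxent n m \<B> \<alpha>)"
    using A B by (simp_all add: is_maxent_def feasible_def)
  ultimately show ?thesis
    unfolding cells_def[symmetric]
    using is_maxent_eq_prod_marginals[OF A] is_maxent_eq_prod_marginals[OF B]
    by (intro KL_eq_sum_cells)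
qed

end
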